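(* Let $\mathbb{P}$ and $F_b$ be as in the context. For any $\varepsilon>0$ there exist $\delta=\delta(\varepsilon)>0$, independent of $\Lambda$, and an event $B_\varepsilon$ (in the variables $(J,\vec E)$) with $\mathbb{P}(B_\varepsilon)>1-\varepsilon$ such that on $B_\varepsilon$, $$\#\{b\in\Lambda^*:|F_b(J_\Lambda)|>\delta\}>(1-\varepsilon)|\Lambda^*|.$$
   Context: $\Lambda\subset\mathbb{Z}^d$ is a finite cube centred at the origin; $\Lambda^*$ its set of nearest-neighbour edges. Couplings $J=(J_e)$ on all nearest-neighbour edges of $\mathbb{Z}^d$ are i.i.d. standard Gaussian with law $\nu$; $J'$ an independent copy; $J_\Lambda=(J_e)_{e\in\Lambda^*}$, $J_{\Lambda^c}$ the rest. For spins $\eta$ and $e=\{x,y\}$, $\eta_e=\eta_x\eta_y$; $\mathcal S_\Lambda$ is the set of edge configurations on $\Lambda^*$ induced by spin configurations. $H_{\Lambda,J}(\eta)=-\sum_{e\in\Lambda^*}J_e\eta_e$. Metastate representation: for $B_n=[-n,n]^d\supset\Lambda$ and a fixed coupling-independent boundary condition, let $E_n(\eta,\eta')$ be the difference of the energies, from edges outside $\Lambda^*$, of the minimizers of the $B_n$ Hamiltonian constrained to equal $\eta$, resp. $\eta'$, on $\Lambda$. Along a subsequence the law of $(J,\vec E_n)$ converges weakly to that of some $(J,\vec E)$ with $E(\eta,\eta)=0$, $E(\eta,\eta'')=E(\eta,\eta')+E(\eta',\eta'')$ and $(J_{\Lambda^c},\vec E)$ independent of $J_\Lambda$; $\vec E$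 is regarded as indexed by $\mathcal S_\Lambda$; $\kappa_{J_{\Lambda^c}}(d\vec E)$ is the conditional law of $\vec E$ given $J$. Set $d\mathbb{P}=d\nu(J)\,d\nu(J')\,d\kappa_{J_{\Lambda^c}}(\vec E)$. Given $\vec E$, the critical set is $\mathcal C=\bigcup_{\eta\ne\eta'}\{J_\Lambda:\sum_eJ_e(\eta_e-\eta'_e)=E(\eta,\eta')\}$; for $J_\Lambda\notin\mathcal C$, $\eta\prec\eta'$ iff $E(\eta,\eta')+H_{\Lambda,J}(\eta)-H_{\Lambda,J}(\eta')<0$ (a strict total order), and $\sigma^{\pm,b}(J_\Lambda)$ is the $\prec$-minimal element among $\eta$ with $\eta_b=\pm1$. The flexibility of the edge $b$ is $F_b(J_\Lambda)=\big|-\sum_{e\in\Lambda^*}J_e(\sigma^{+,b}_e(J_\Lambda)-\sigma^{-,b}_e(J_\Lambda))+E(\sigma^{+,b}(J_\Lambda),\sigma^{-,b}(J_\Lambda))\big|$, extended continuously to all of $\mathbb{R}^{\Lambda^*}$. *)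

theory Defs
  imports "HOL-Probability.Probability"
begin

text \<open>Sites of Z^d are vectors int^'d (dimension d = CARD('d), fixed).
  An edge is the two-element set {x,y} of nearest neighbours.\<close>

type_synonym 'd vertex = "int ^ 'd"
type_synonym 'd edge = "'d vertex set"
type_synonym 'd edge_cfg = "'d edge \<Rightarrow> real"

definition nn :: "'d::finite vertex \<Rightarrow> 'd vertex \<Rightarrow> bool" where
  "nn x y \<longleftrightarrow> (\<Sum>i\<in>UNIV. \<bar>x $ i - y $ i\<bar>) = 1"

definition cube :: "int \<Rightarrow> 'd::finite vertex set" where
  "cube L = {x. \<forall>i. \<bar>x $ i\<bar> \<le> L}"

definition edges_in :: "'d::finite vertex set \<Rightarrow> 'd edge set" where
  "edges_in A = {{x, y} | x y. x \<in> A \<and> y \<in> A \<and> nn x y}"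

definition all_edges :: "'d::finite edge set" where
  "all_edges = edges_in UNIV"

definition LStar :: "int \<Rightarrow> 'd::finite edge set" where
  "LStar L = edges_in (cube L)"

definition edge_config :: "int \<Rightarrow> ('d::finite vertex \<Rightarrow> real) \<Rightarrow> 'd edge_cfg" where
  "edge_config L \<eta> = (\<lambda>e. if e \<in> LStar L then (\<Prod>x\<in>e. \<eta> x) else 0)"

definition SL :: "int \<Rightarrow> 'd::finite edge_cfg set" where
  "SL L = {edge_config L \<eta> | \<eta>. \<forall>x\<in>cube L. \<eta> x \<in> {-1, 1}}"

definition Ham :: "int \<Rightarrow> ('d::finite edge \<Rightarrow> real) \<Rightarrow> 'd edge_cfg \<Rightarrow> real" where
  "Ham L J \<eta> = - (\<Sum>e\<in>LStar L. J e * \<eta> e)"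

type_synonym 'd evec = "('d edge_cfg \<times> 'd edge_cfg) \<Rightarrow> real"

definition critical :: "int \<Rightarrow> 'd::finite evec \<Rightarrow> ('d edge \<Rightarrow> real) set" where
  "critical L E = {J. \<exists>\<eta>\<in>SL L. \<exists>\<eta>'\<in>SL L. \<eta> \<noteq> \<eta>' \<and>
      (\<Sum>e\<in>LStar L. J e * (\<eta> e - \<eta>' e)) = E (\<eta>, \<eta>')}"

definition prec :: "int \<Rightarrow> 'd::finite evec \<Rightarrow> ('d edge \<Rightarrow> real) \<Rightarrow> 'd edge_cfg \<Rightarrow> 'd edge_cfg \<Rightarrow> bool" where
  "prec L E J \<eta> \<eta>' \<longleftrightarrow> E (\<eta>, \<eta>') + Ham L J \<eta> - Ham L J \<eta>' < 0"

definition sigma :: "int \<Rightarrow> 'd::finite evec \<Rightarrow> ('d edge \<Rightarrow> real) \<Rightarrow> 'd edge \<Rightarrow> real \<Rightarrow> 'd edge_cfg" where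
  "sigma L E J b s = (THE \<eta>. \<eta> \<in> SL L \<and> \<eta> b = s \<and>
      (\<forall>\<eta>'\<in>SL L. \<eta>' b = s \<longrightarrow> \<eta>' \<noteq> \<eta> \<longrightarrow> prec L E J \<eta> \<eta>'))"

text \<open>The defining formula of the flexibility (meaningful off the critical set).\<close>
definition flex_raw :: "int \<Rightarrow> 'd::finite evec \<Rightarrow> 'd edge \<Rightarrow> ('d edge \<Rightarrow> real) \<Rightarrow> real" where
  "flex_raw L E b J =
     \<bar>- (\<Sum>e\<in>LStar L. J e * (sigma L E J b 1 e - sigma L E J b (-1) e))
      + E (sigma L E J b 1, sigma L E J b (-1))\<bar>"

definition flexibility :: "int \<Rightarrow> 'd::finite evec \<Rightarrow> 'd edge \<Rightarrow> ('d edge \<Rightarrow> real) \<Rightarrow> real" where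
  "flexibility L E b J =
     (if J \<notin> critical L E then flex_raw L E b J
      else Lim (at J within - critical L E) (flex_raw L E b))"

definition nu :: "('d::finite edge \<Rightarrow> real) measure" where
  "nu = (\<Pi>\<^sub>M e\<in>all_edges. density lborel std_normal_density)"

definition Espace :: "int \<Rightarrow> 'd::finite evec measure" where
  "Espace L = (\<Pi>\<^sub>M p\<in>SL L \<times> SL L. borel)"

definition Ecocycle :: "int \<Rightarrow> 'd::finite evec \<Rightarrow> bool" where
  "Ecocycle L E \<longleftrightarrow> (\<forall>\<eta>\<in>SL L. E (\<eta>, \<eta>) = 0) \<and>
     (\<forall>\<eta>\<in>SL L. \<forall>\<eta>'\<in>SL L. \<forall>\<eta>''\<in>SL L. E (\<eta>, \<eta>'') = E (\<eta>, \<eta>') + E (\<eta>', \<eta>''))"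

definition metastate_kernel :: "int \<Rightarrow> (('d::finite edge \<Rightarrow> real) \<Rightarrow> 'd evec measure) \<Rightarrow> bool" where
  "metastate_kernel L \<kappa> \<longleftrightarrow>
     \<kappa> \<in> measurable (\<Pi>\<^sub>M e\<in>all_edges - LStar L. borel) (prob_algebra (Espace L)) \<and>
     (\<forall>j\<in>space (\<Pi>\<^sub>M e\<in>all_edges - LStar L. (borel::real measure)).
        AE E in \<kappa> j. Ecocycle L E)"

definition metaP :: "int \<Rightarrow> (('d::finite edge \<Rightarrow> real) \<Rightarrow> 'd evec measure)
     \<Rightarrow> (('d edge \<Rightarrow> real) \<times> 'd evec) measure" where
  "metaP L \<kappa> = nu \<bind> (\<lambda>J. distr (\<kappa> (restrict J (all_edges - LStar L)))
                                   (nu \<Otimes>\<^sub>M Espace L) (\<lambda>E. (J, E)))"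

end

theory Submission
  imports Defs
begin

(* Off the critical set the cocycle E is a difference of potentials, so sigma^{+-,b} minimises
   the energy H(eta) - E(eta^+, eta) on the fibre {eta_b = +-1}.  Splitting off the term of J_b
   gives F_b = 2 |J_b - c_b| with a centre c_b that does not depend on J_b.  Since the metastate
   only sees couplings outside Lambda^*, J_b is a standard Gaussian independent of c_b, and its
   density is at most 1/2, so P(|J_b - c_b| <= r) <= r.  With delta = eps^2, Markov's inequality
   bounds the probability that at least eps |Lambda^*| edges have F_b <= delta by eps/2.  The
   same bound with r = 0 shows that the critical set is null, and the cocycle identity holds
   almost surely by assumption. *)

lemma prod_in_plus_minus_one:
  "finite A \<Longrightarrow> \<forall>x\<in>A. f x \<in> {-1, 1::real} \<Longrightarrow> prod f A \<in> {-1, 1}"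
  by (induction A rule: finite_induct) auto

lemma card_filter_gt_of_card_compl_lt:
  assumes "finite A" "real (card {a\<in>A. \<not> P a}) < \<epsilon> * real (card A)"
  shows "(1 - \<epsilon>) * real (card A) < real (card {a\<in>A. P a})"
proof -
  have "card A = card {a\<in>A. P a} + card {a\<in>A. \<not> P a}"
    using assms(1) by (subst card_Un_disjoint[symmetric]) (auto intro: arg_cong[where f=card])
  then show ?thesis
    using assms(2) by (simp add: algebra_simps)
qed

lemma sets_card_events_ge:
  assumes "finite I" "\<And>i. i \<in> I \<Longrightarrow> A i \<in> sets M"
  shows "{x \<in> space M. t \<le> real (card {i\<in>I. x \<in> A i})} \<in> sets M"
proof -
  have "real (card {i\<in>I. x \<in> A i}) = (\<Sum>i\<in>I. indicator (A i) x)" for x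
    using assms(1) by (simp add: indicator_def sum.If_cases Int_def)
  then show ?thesis
    using assms by (simp add: borel_measurable_sum)
qed

lemma (in prob_space) prob_card_events_ge_le:
  assumes I: "finite I" and A: "\<And>i. i \<in> I \<Longrightarrow> A i \<in> events"
    and p: "\<And>i. i \<in> I \<Longrightarrow> prob (A i) \<le> p" and t: "t > 0"
  shows "prob {x \<in> space M. t \<le> real (card {i\<in>I. x \<in> A i})} \<le> real (card I) * p / t"
proof -
  define u where "u x = (\<Sum>i\<in>I. indicator (A i) x :: real)" for x
  have card_eq: "real (card {i\<in>I. x \<in> A i}) = u x" for x
    using I by (simp add: u_def indicator_def sum.If_cases Int_def)
  have int_u: "integrable M u"
    unfolding u_def using A
    by (intro Bochner_Integration.integrable_sum) (auto simp: emeasure_eq_measure)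
  have "prob {x \<in> space M. t \<le> real (card {i\<in>I. x \<in> A i})} \<le> (\<integral>x. u x \<partial>M) / t"
    unfolding card_eq using int_u t
    by (intro integral_Markov_inequality_measure[where A="space M"]) (auto simp: u_def[abs_def] sum_nonneg)
  also have "(\<integral>x. u x \<partial>M) = (\<Sum>i\<in>I. prob (A i))"
    unfolding u_def using A by (subst Bochner_Integration.integral_sum) (auto simp: emeasure_eq_measure)
  also have "\<dots> \<le> real (card I) * p"
    using sum_mono[OF p, of I] by simp
  finally show ?thesis
    using t by (simp add: divide_right_mono)
qed

abbreviation gauss :: "real measure" where
  "gauss \<equiv> density lborel std_normal_density"

lemma prob_space_gauss: "prob_space gauss"
  by (rule prob_space_normal_density) simp

lemma sets_gauss [measurable_cong]: "sets gauss = sets borel"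
  by simp

lemma std_normal_density_le: "std_normal_density x \<le> 1 / 2"
proof -
  have "2 \<le> sqrt (2 * pi)"
    using real_sqrt_le_mono[of 4 "2 * pi"] pi_gt3 by simp
  then have "1 / sqrt (2 * pi) \<le> 1 / 2"
    by (simp add: divide_simps)
  moreover have "exp (- x\<^sup>2 / 2) \<le> 1"
    by simp
  ultimately show ?thesis
    unfolding std_normal_density_def using mult_mono[of "1 / sqrt (2 * pi)" "1 / 2" "exp (- x\<^sup>2 / 2)" 1]
    by simp
qed

lemma emeasure_gauss_near_le:
  assumes "r \<ge> 0"
  shows "emeasure gauss {x. \<bar>x - c\<bar> \<le> r} \<le> ennreal r"
proof -
  have "{x. \<bar>x - c\<bar> \<le> r} = {c - r .. c + r}"
    by (auto simp: abs_le_iff)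
  then have "emeasure gauss {x. \<bar>x - c\<bar> \<le> r} =
      (\<integral>\<^sup>+x. ennreal (std_normal_density x) * indicator {c - r .. c + r} x \<partial>lborel)"
    by (subst emeasure_density) auto
  also have "\<dots> \<le> (\<integral>\<^sup>+x. ennreal (1 / 2) * indicator {c - r .. c + r} x \<partial>lborel)"
    using ennreal_leI[OF std_normal_density_le]
    by (intro nn_integral_mono) (auto split: split_indicator)
  also have "\<dots> = ennreal (1 / 2) * ennreal (2 * r)"
    using assms by (subst nn_integral_cmult_indicator) auto
  also have "\<dots> = ennreal r"
    using assms by (subst ennreal_mult[symmetric]) auto
  finally show ?thesis .
qed

lemma nn_integral_gauss_near_le:
  assumes K: "prob_space K" and c[measurable]: "c \<in> borel_measurable K" and r: "r \<ge> 0"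
  shows "(\<integral>\<^sup>+x. emeasure K {y \<in> space K. \<bar>x - c y\<bar> \<le> r} \<partial>gauss) \<le> ennreal r"
proof -
  define A where "A = {z \<in> space (gauss \<Otimes>\<^sub>M K). \<bar>fst z - c (snd z)\<bar> \<le> r}"
  have A[measurable]: "A \<in> sets (gauss \<Otimes>\<^sub>M K)"
    unfolding A_def by measurable
  interpret pair_sigma_finite gauss K
    by (intro pair_sigma_finite.intro prob_space_imp_sigma_finite prob_space_gauss K)
  have slice: "(\<integral>\<^sup>+y. indicator A (x, y) \<partial>K) = emeasure K {y \<in> space K. \<bar>x - c y\<bar> \<le> r}" for x
  proof -
    have "(\<integral>\<^sup>+y. indicator A (x, y) \<partial>K) = (\<integral>\<^sup>+y. indicator {y \<in> space K. \<bar>x - c y\<bar> \<le> r} y \<partial>K)"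
      by (rule nn_integral_cong) (auto simp: A_def space_pair_measure split: split_indicator)
    also have "\<dots> = emeasure K {y \<in> space K. \<bar>x - c y\<bar> \<le> r}"
      by (rule nn_integral_indicator) measurable
    finally show ?thesis .
  qed
  have "(\<integral>\<^sup>+x. emeasure K {y \<in> space K. \<bar>x - c y\<bar> \<le> r} \<partial>gauss) =
      (\<integral>\<^sup>+x. (\<integral>\<^sup>+y. indicator A (x, y) \<partial>K) \<partial>gauss)"
    unfolding slice ..
  also have "\<dots> = (\<integral>\<^sup>+y. (\<integral>\<^sup>+x. indicator A (x, y) \<partial>gauss) \<partial>K)"
    by (rule Fubini[symmetric]) (simp add: A)
  also have "\<dots> \<le> (\<integral>\<^sup>+y. ennreal r \<partial>K)"
  proof (rule nn_integral_mono)
    fix y assume y: "y \<in> space K"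
    have "(\<integral>\<^sup>+x. indicator A (x, y) \<partial>gauss) = (\<integral>\<^sup>+x. indicator {x. \<bar>x - c y\<bar> \<le> r} x \<partial>gauss)"
      using y by (intro nn_integral_cong) (auto simp: A_def space_pair_measure split: split_indicator)
    also have "\<dots> = emeasure gauss {x. \<bar>x - c y\<bar> \<le> r}"
      by (rule nn_integral_indicator) simp
    also have "\<dots> \<le> ennreal r"
      by (rule emeasure_gauss_near_le[OF r])
    finally show "(\<integral>\<^sup>+x. indicator A (x, y) \<partial>gauss) \<le> ennreal r" .
  qed
  also have "\<dots> = ennreal r"
    using prob_space.emeasure_space_1[OF K] by simp
  finally show ?thesis .
qed

section \<open>Spin configurations on the cube\<close>

lemma finite_cube: "finite (cube L :: 'd::finite vertex set)"
proof -
  have "cube L \<subseteq> (\<lambda>f. \<chi> i. f i) ` (PiE UNIV (\<lambda>_::'d. {-L..L}))"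
  proof
    fix x :: "'d vertex"
    assume "x \<in> cube L"
    then have "(\<lambda>i. x $ i) \<in> PiE UNIV (\<lambda>_. {-L..L})"
      unfolding cube_def by (auto simp: abs_le_iff minus_le_iff)
    then show "x \<in> (\<lambda>f. \<chi> i. f i) ` (PiE UNIV (\<lambda>_::'d. {-L..L}))"
      by (intro image_eqI[where x="\<lambda>i. x $ i"]) auto
  qed
  then show ?thesis
    by (rule finite_subset) (intro finite_imageI finite_PiE; simp)
qed

lemma finite_LStar: "finite (LStar L :: 'd::finite edge set)"
proof (rule finite_subset)
  show "LStar L \<subseteq> Pow (cube L :: 'd vertex set)"
    by (auto simp: LStar_def edges_in_def)
qed (simp add: finite_cube)

lemma LStar_subset_all_edges: "LStar L \<subseteq> all_edges"
  by (auto simp: LStar_def all_edges_def edges_in_def)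

lemma LStar_nonempty:
  assumes "L \<ge> 1"
  shows "LStar L \<noteq> ({} :: 'd::finite edge set)"
proof -
  obtain i0 :: 'd where True by blast
  define y :: "'d vertex" where "y = (\<chi> i. if i = i0 then 1 else 0)"
  have "nn 0 y"
    unfolding nn_def y_def by (simp add: if_distrib[of abs] cong: if_cong)
  moreover have "0 \<in> cube L" "y \<in> cube L"
    using assms by (auto simp: cube_def y_def)
  ultimately have "{0, y} \<in> LStar L"
    by (auto simp: LStar_def edges_in_def)
  then show ?thesis by auto
qed

lemma SL_outside: "\<eta> \<in> SL L \<Longrightarrow> e \<notin> LStar L \<Longrightarrow> \<eta> e = 0"
  by (auto simp: SL_def edge_config_def)

lemma SL_inside:
  assumes "\<eta> \<in> SL L" "e \<in> LStar L"
  shows "\<eta> e \<in> {-1, 1}"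
proof -
  obtain s where s: "\<eta> = edge_config L s" "\<forall>x\<in>cube L. s x \<in> {-1, 1}"
    using assms(1) by (auto simp: SL_def)
  obtain x y where "e = {x, y}" "x \<in> cube L" "y \<in> cube L"
    using assms(2) by (auto simp: LStar_def edges_in_def)
  then have "prod s e \<in> {-1, 1}"
    using s by (intro prod_in_plus_minus_one) auto
  then show ?thesis
    using s assms(2) by (simp add: edge_config_def)
qed

lemma finite_SL: "finite (SL L :: 'd::finite edge_cfg set)"
proof (rule finite_subset)
  show "SL L \<subseteq> {f. \<forall>e. (e \<in> LStar L \<longrightarrow> f e \<in> {-1, 1}) \<and> (e \<notin> LStar L \<longrightarrow> f e = 0)}"
    using SL_inside SL_outside by blast
qed (intro finite_set_of_finite_funs finite_LStar; simp)

lemma SL_fibre_nonempty: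
  assumes b: "b \<in> LStar L" and s: "s \<in> {-1, 1::real}"
  shows "{\<eta>\<in>SL L. \<eta> b = s} \<noteq> {}"
proof -
  obtain x y where xy: "b = {x, y}" "nn x y"
    using b by (auto simp: LStar_def edges_in_def)
  then have "x \<noteq> y" by (auto simp: nn_def)
  define \<sigma> where "\<sigma> z = (if z = x then s else 1)" for z
  have "\<forall>z\<in>cube L. \<sigma> z \<in> {-1, 1}"
    using s by (simp add: \<sigma>_def)
  then have "edge_config L \<sigma> \<in> SL L"
    unfolding SL_def by blast
  moreover have "edge_config L \<sigma> b = s"
    using b xy \<open>x \<noteq> y\<close> by (simp add: edge_config_def \<sigma>_def)
  ultimately show ?thesis by blast
qed

lemma finite_SL_fibre: "finite {\<eta>\<in>SL L. \<eta> b = s}"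
  by (rule finite_subset[OF _ finite_SL]) auto

definition all_plus :: "int \<Rightarrow> 'd::finite edge_cfg" where
  "all_plus L = edge_config L (\<lambda>_. 1)"

lemma all_plus_in_SL: "all_plus L \<in> SL L"
  by (auto simp: all_plus_def SL_def)

section \<open>Energies and the flexibility\<close>

definition energy :: "int \<Rightarrow> ('d::finite edge \<Rightarrow> real) \<Rightarrow> 'd evec \<Rightarrow> 'd edge_cfg \<Rightarrow> real" where
  "energy L J E \<eta> = Ham L J \<eta> - E (all_plus L, \<eta>)"

definition energy_off :: "int \<Rightarrow> 'd::finite edge \<Rightarrow> ('d edge \<Rightarrow> real) \<Rightarrow> 'd evec \<Rightarrow> 'd edge_cfg \<Rightarrow> real" where
  "energy_off L b J E \<eta> = - (\<Sum>e\<in>LStar L - {b}. J e * \<eta> e) - E (all_plus L, \<eta>)"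

definition min_energy_off :: "int \<Rightarrow> 'd::finite edge \<Rightarrow> real \<Rightarrow> ('d edge \<Rightarrow> real) \<Rightarrow> 'd evec \<Rightarrow> real" where
  "min_energy_off L b s J E = Min (energy_off L b J E ` {\<eta>\<in>SL L. \<eta> b = s})"

definition flex_centre :: "int \<Rightarrow> 'd::finite edge \<Rightarrow> ('d edge \<Rightarrow> real) \<Rightarrow> 'd evec \<Rightarrow> real" where
  "flex_centre L b J E = (min_energy_off L b 1 J E - min_energy_off L b (-1) J E) / 2"

lemma Ecocycle_eq_diff:
  "Ecocycle L E \<Longrightarrow> \<eta> \<in> SL L \<Longrightarrow> \<eta>' \<in> SL L \<Longrightarrow>
    E (\<eta>, \<eta>') = E (all_plus L, \<eta>') - E (all_plus L, \<eta>)"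
  using all_plus_in_SL[of L] unfolding Ecocycle_def by (metis add_diff_cancel_left')

lemma prec_iff_energy_less:
  "Ecocycle L E \<Longrightarrow> \<eta> \<in> SL L \<Longrightarrow> \<eta>' \<in> SL L \<Longrightarrow>
    prec L E J \<eta> \<eta>' \<longleftrightarrow> energy L J E \<eta> < energy L J E \<eta>'"
  using Ecocycle_eq_diff[of L E \<eta> \<eta>'] unfolding prec_def energy_def by auto

lemma sum_coupling_diff: "(\<Sum>e\<in>LStar L. J e * (\<eta> e - \<eta>' e)) = Ham L J \<eta>' - Ham L J \<eta>"
  unfolding Ham_def by (simp add: right_diff_distrib sum_subtractf)

lemma energy_inj_on_SL:
  assumes "Ecocycle L E" "J \<notin> critical L E"
  shows "inj_on (energy L J E) (SL L)"
proof (rule inj_onI, rule ccontr)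
  fix \<eta> \<eta>'
  assume h: "\<eta> \<in> SL L" "\<eta>' \<in> SL L" "energy L J E \<eta> = energy L J E \<eta>'" "\<eta> \<noteq> \<eta>'"
  then have "(\<Sum>e\<in>LStar L. J e * (\<eta> e - \<eta>' e)) = E (\<eta>, \<eta>')"
    using Ecocycle_eq_diff[OF assms(1) h(1,2)] unfolding sum_coupling_diff energy_def by simp
  then show False
    using assms(2) h unfolding critical_def by blast
qed

lemma energy_split: "b \<in> LStar L \<Longrightarrow> energy L J E \<eta> = - J b * \<eta> b + energy_off L b J E \<eta>"
  unfolding energy_def energy_off_def Ham_def by (simp add: sum.remove[OF finite_LStar])

lemma energy_off_fun_upd: "energy_off L b (J(b := x)) E = energy_off L b J E"
  unfolding energy_off_def by (auto intro!: sum.cong)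

lemma flex_centre_fun_upd: "flex_centre L b (J(b := x)) E = flex_centre L b J E"
  unfolding flex_centre_def min_energy_off_def energy_off_fun_upd ..

lemma Min_energy_fibre:
  assumes b: "b \<in> LStar L" and s: "s \<in> {-1, 1}"
  shows "Min (energy L J E ` {\<eta>\<in>SL L. \<eta> b = s}) = - J b * s + min_energy_off L b s J E"
proof -
  let ?A = "{\<eta>\<in>SL L. \<eta> b = s}"
  have "energy L J E ` ?A = (\<lambda>t. - J b * s + t) ` (energy_off L b J E ` ?A)"
    using energy_split[OF b] by (auto simp: image_image intro!: image_cong)
  also have "Min \<dots> = - J b * s + Min (energy_off L b J E ` ?A)"
    using finite_SL_fibre SL_fibre_nonempty[OF b s]
    by (intro mono_Min_commute[symmetric]) (auto simp: mono_def)
  finally show ?thesis by (simp add: min_energy_off_def)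
qed

lemma sigma_energy:
  assumes coc: "Ecocycle L E" and nc: "J \<notin> critical L E"
    and b: "b \<in> LStar L" and s: "s \<in> {-1, 1}"
  shows "sigma L E J b s \<in> SL L"
    and "energy L J E (sigma L E J b s) = - J b * s + min_energy_off L b s J E"
proof -
  let ?A = "{\<eta>\<in>SL L. \<eta> b = s}"
  have "Min (energy L J E ` ?A) \<in> energy L J E ` ?A"
    using finite_SL_fibre SL_fibre_nonempty[OF b s] by (intro Min_in) auto
  then obtain m where m: "Min (energy L J E ` ?A) = energy L J E m" "m \<in> ?A"
    by (rule imageE)
  have min: "energy L J E m \<le> energy L J E \<eta>" if "\<eta> \<in> ?A" for \<eta>
    unfolding m(1)[symmetric] using finite_SL_fibre that by (intro Min_le) auto
  have "sigma L E J b s = m"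
    unfolding sigma_def
  proof (rule the_equality)
    show "m \<in> SL L \<and> m b = s \<and> (\<forall>\<eta>'\<in>SL L. \<eta>' b = s \<longrightarrow> \<eta>' \<noteq> m \<longrightarrow> prec L E J m \<eta>')"
    proof (intro conjI ballI impI)
      fix \<eta>' assume \<eta>': "\<eta>' \<in> SL L" "\<eta>' b = s" "\<eta>' \<noteq> m"
      have "energy L J E m \<noteq> energy L J E \<eta>'"
        using inj_onD[OF energy_inj_on_SL[OF coc nc], of m \<eta>'] m(2) \<eta>' by auto
      then have "energy L J E m < energy L J E \<eta>'"
        using min[of \<eta>'] \<eta>' by simp
      then show "prec L E J m \<eta>'"
        using prec_iff_energy_less[OF coc] \<eta>'(1) m(2) by simp
    qed (use m(2) in simp_all)
  next
    fix \<eta> assume \<eta>: "\<eta> \<in> SL L \<and> \<eta> b = s \<and> (\<forall>\<eta>'\<in>SL L. \<eta>' b = s \<longrightarrow> \<eta>' \<noteq> \<eta> \<longrightarrow> prec L E J \<eta> \<eta>')"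
    show "\<eta> = m"
    proof (rule ccontr)
      assume "\<eta> \<noteq> m"
      then have "prec L E J \<eta> m"
        using \<eta> m(2) by simp
      then have "energy L J E \<eta> < energy L J E m"
        using prec_iff_energy_less[OF coc] \<eta> m(2) by simp
      then show False
        using min[of \<eta>] \<eta> by simp
    qed
  qed
  then show "sigma L E J b s \<in> SL L"
    and "energy L J E (sigma L E J b s) = - J b * s + min_energy_off L b s J E"
    using m Min_energy_fibre[OF b s] by simp_all
qed

lemma flexibility_eq:
  assumes coc: "Ecocycle L E" and nc: "J \<notin> critical L E" and b: "b \<in> LStar L"
  shows "flexibility L E b J = 2 * \<bar>J b - flex_centre L b J E\<bar>"
proof -
  let ?p = "sigma L E J b 1" and ?m = "sigma L E J b (-1)"
  have p: "?p \<in> SL L" "energy L J E ?p = - J b + min_energy_off L b 1 J E"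
    using sigma_energy[OF coc nc b, of 1] by simp_all
  have m: "?m \<in> SL L" "energy L J E ?m = J b + min_energy_off L b (-1) J E"
    using sigma_energy[OF coc nc b, of "-1"] by simp_all
  have "flexibility L E b J = \<bar>energy L J E ?p - energy L J E ?m\<bar>"
    using nc unfolding flexibility_def flex_raw_def sum_coupling_diff
      Ecocycle_eq_diff[OF coc p(1) m(1)] energy_def by simp
  also have "\<dots> = 2 * \<bar>J b - flex_centre L b J E\<bar>"
    unfolding p(2) m(2) flex_centre_def by (auto simp: abs_if field_simps)
  finally show ?thesis .
qed

definition rigid_edges :: "int \<Rightarrow> real \<Rightarrow> ('d::finite edge \<Rightarrow> real) \<Rightarrow> 'd evec \<Rightarrow> 'd edge set" where
  "rigid_edges L r J E = {b\<in>LStar L. \<bar>J b - flex_centre L b J E\<bar> \<le> r}"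

lemma card_flexible_edges_gt:
  fixes J :: "'d::finite edge \<Rightarrow> real"
  assumes coc: "Ecocycle L E" and nc: "J \<notin> critical L E"
    and few: "real (card (rigid_edges L (\<delta> / 2) J E)) < \<epsilon> * real (card (LStar L :: 'd edge set))"
  shows "(1 - \<epsilon>) * real (card (LStar L :: 'd edge set)) < real (card {b\<in>LStar L. \<bar>flexibility L E b J\<bar> > \<delta>})"
proof -
  have eq: "{b\<in>LStar L. \<not> \<bar>flexibility L E b J\<bar> > \<delta>} = rigid_edges L (\<delta> / 2) J E"
    unfolding rigid_edges_def using flexibility_eq[OF coc nc] by auto
  show ?thesis
    by (rule card_filter_gt_of_card_compl_lt[OF finite_LStar]) (use few in \<open>simp only: eq\<close>)
qed

definition witness_edge :: "int \<Rightarrow> 'd::finite edge_cfg \<Rightarrow> 'd edge_cfg \<Rightarrow> 'd edge" where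
  "witness_edge L \<eta> \<eta>' = (SOME b. b \<in> LStar L \<and> \<eta> b \<noteq> \<eta>' b)"

definition critical_value :: "int \<Rightarrow> 'd::finite edge_cfg \<Rightarrow> 'd edge_cfg \<Rightarrow> ('d edge \<Rightarrow> real) \<Rightarrow> 'd evec \<Rightarrow> real" where
  "critical_value L \<eta> \<eta>' J E =
     (E (\<eta>, \<eta>') - (\<Sum>e\<in>LStar L - {witness_edge L \<eta> \<eta>'}. J e * (\<eta> e - \<eta>' e)))
       / (\<eta> (witness_edge L \<eta> \<eta>') - \<eta>' (witness_edge L \<eta> \<eta>'))"

lemma witness_edge:
  assumes "\<eta> \<in> SL L" "\<eta>' \<in> SL L" "\<eta> \<noteq> \<eta>'"
  shows "witness_edge L \<eta> \<eta>' \<in> LStar L" "\<eta> (witness_edge L \<eta> \<eta>') \<noteq> \<eta>' (witness_edge L \<eta> \<eta>')"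
proof -
  obtain e where e: "\<eta> e \<noteq> \<eta>' e"
    using assms(3) by (auto simp: fun_eq_iff)
  then have "e \<in> LStar L"
    using SL_outside[OF assms(1)] SL_outside[OF assms(2)] by metis
  then have "\<exists>b. b \<in> LStar L \<and> \<eta> b \<noteq> \<eta>' b"
    using e by blast
  then show "witness_edge L \<eta> \<eta>' \<in> LStar L" "\<eta> (witness_edge L \<eta> \<eta>') \<noteq> \<eta>' (witness_edge L \<eta> \<eta>')"
    unfolding witness_edge_def by (metis (mono_tags, lifting) someI_ex)+
qed

text \<open>Each piece of the critical set is a graph over the coupling of an edge on which the two
  configurations differ.\<close>
lemma not_critical_iff:
  "J \<notin> critical L E \<longleftrightarrow>
     (\<forall>\<eta>\<in>SL L. \<forall>\<eta>'\<in>SL L. \<eta> \<noteq> \<eta>' \<longrightarrow> J (witness_edge L \<eta> \<eta>') \<noteq> critical_value L \<eta> \<eta>' J E)"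
proof -
  have "(\<Sum>e\<in>LStar L. J e * (\<eta> e - \<eta>' e)) = E (\<eta>, \<eta>') \<longleftrightarrow>
      J (witness_edge L \<eta> \<eta>') = critical_value L \<eta> \<eta>' J E"
    if "\<eta> \<in> SL L" "\<eta>' \<in> SL L" "\<eta> \<noteq> \<eta>'" for \<eta> \<eta>'
  proof -
    note w = witness_edge[OF that]
    have "(\<Sum>e\<in>LStar L. J e * (\<eta> e - \<eta>' e)) =
        J (witness_edge L \<eta> \<eta>') * (\<eta> (witness_edge L \<eta> \<eta>') - \<eta>' (witness_edge L \<eta> \<eta>'))
        + (\<Sum>e\<in>LStar L - {witness_edge L \<eta> \<eta>'}. J e * (\<eta> e - \<eta>' e))"
      by (rule sum.remove[OF finite_LStar w(1)])
    then show ?thesis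
      using w(2) unfolding critical_value_def by (auto simp: field_simps)
  qed
  then show ?thesis
    unfolding critical_def by blast
qed

lemma critical_value_fun_upd:
  "critical_value L \<eta> \<eta>' (J(witness_edge L \<eta> \<eta>' := x)) E = critical_value L \<eta> \<eta>' J E"
  unfolding critical_value_def by (auto intro!: sum.cong arg_cong2[where f="(/)"])

section \<open>Anti-concentration under the metastate\<close>

lemma prob_space_nu: "prob_space (nu :: ('d::finite edge \<Rightarrow> real) measure)"
  unfolding nu_def by (intro prob_space_PiM prob_space_gauss)

lemma nn_integral_nu_split:
  assumes b: "b \<in> all_edges" and h[measurable]: "h \<in> borel_measurable (nu :: ('d::finite edge \<Rightarrow> real) measure)"
  shows "(\<integral>\<^sup>+J. h J \<partial>nu) = (\<integral>\<^sup>+Y. (\<integral>\<^sup>+x. h (Y(b := x)) \<partial>gauss) \<partial>(\<Pi>\<^sub>M e\<in>all_edges - {b}. gauss))"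
proof -
  let ?R = "\<Pi>\<^sub>M e\<in>all_edges - {b}. gauss"
  have "(\<lambda>z. (snd z)(b := fst z)) \<in> gauss \<Otimes>\<^sub>M ?R \<rightarrow>\<^sub>M nu"
    unfolding nu_def by (rule measurable_fun_upd[where J="all_edges - {b}"]) (use b in auto)
  then have upd[measurable]: "(\<lambda>(x, Y). Y(b := x)) \<in> gauss \<Otimes>\<^sub>M ?R \<rightarrow>\<^sub>M nu"
    by (simp add: split_beta')
  have distr: "distr (gauss \<Otimes>\<^sub>M ?R) nu (\<lambda>(x, Y). Y(b := x)) = nu"
    using distr_pair_PiM_eq_PiM[of "all_edges - {b}" "\<lambda>_. gauss" b] prob_space_gauss insert_Diff[OF b]
    unfolding nu_def by simp
  have "(\<integral>\<^sup>+J. h J \<partial>nu) = (\<integral>\<^sup>+z. h ((\<lambda>(x, Y). Y(b := x)) z) \<partial>(gauss \<Otimes>\<^sub>M ?R))"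
    using nn_integral_distr[OF upd, unfolded distr, OF h] .
  also have "\<dots> = (\<integral>\<^sup>+Y. (\<integral>\<^sup>+x. h (Y(b := x)) \<partial>gauss) \<partial>?R)"
    by (subst pair_sigma_finite.nn_integral_snd[symmetric])
      (auto intro!: pair_sigma_finite.intro prob_space_imp_sigma_finite prob_space_gauss prob_space_PiM
        simp: split_beta')
  finally show ?thesis .
qed

abbreviation joint_space :: "int \<Rightarrow> (('d::finite edge \<Rightarrow> real) \<times> 'd evec) measure" where
  "joint_space L \<equiv> nu \<Otimes>\<^sub>M Espace L"

lemma measurable_coupling:
  assumes "e \<in> all_edges"
  shows "(\<lambda>z. fst z e) \<in> borel_measurable (joint_space L)"
proof -
  have "(\<lambda>J. J e) \<in> borel_measurable (\<Pi>\<^sub>M e\<in>all_edges. gauss)"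
    by (subst measurable_cong_sets[OF refl sets_gauss[symmetric]])
      (rule measurable_component_singleton[OF assms])
  then show ?thesis
    unfolding nu_def by (rule measurable_compose[OF measurable_fst])
qed

lemma measurable_evec:
  "p \<in> SL L \<times> SL L \<Longrightarrow> (\<lambda>z. snd z p) \<in> borel_measurable (joint_space L)"
  unfolding Espace_def by (rule measurable_compose[OF measurable_snd measurable_component_singleton])

lemma measurable_energy_off:
  "\<eta> \<in> SL L \<Longrightarrow> (\<lambda>z. energy_off L b (fst z) (snd z) \<eta>) \<in> borel_measurable (joint_space L)"
  unfolding energy_off_def
  by (intro borel_measurable_diff borel_measurable_uminus borel_measurable_sum borel_measurable_times
      measurable_coupling measurable_evec borel_measurable_const)
    (use LStar_subset_all_edges all_plus_in_SL in auto)

lemma measurable_flex_centre: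
  "(\<lambda>z. flex_centre L b (fst z) (snd z)) \<in> borel_measurable (joint_space L)"
  unfolding flex_centre_def min_energy_off_def
  by (intro borel_measurable_divide borel_measurable_diff borel_measurable_const borel_measurable_Min
      measurable_energy_off finite_SL_fibre) auto

lemma measurable_critical_value:
  "\<eta> \<in> SL L \<Longrightarrow> \<eta>' \<in> SL L \<Longrightarrow>
    (\<lambda>z. critical_value L \<eta> \<eta>' (fst z) (snd z)) \<in> borel_measurable (joint_space L)"
  unfolding critical_value_def
  by (intro borel_measurable_divide borel_measurable_diff borel_measurable_sum borel_measurable_times
      measurable_coupling measurable_evec borel_measurable_const)
    (use LStar_subset_all_edges in auto)

lemma pred_Ecocycle: "Measurable.pred (Espace L) (Ecocycle L)"
proof -
  have [measurable]: "(\<lambda>E. E p) \<in> borel_measurable (Espace L)" if "p \<in> SL L \<times> SL L" for p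
    using that unfolding Espace_def by (rule measurable_component_singleton)
  show ?thesis
    unfolding Ecocycle_def pred_def
    by (intro sets.sets_Collect_conj sets.sets_Collect_finite_All finite_SL)
      (auto intro!: borel_measurable_eq borel_measurable_add)
qed

definition coupling_near_centre :: "int \<Rightarrow> real \<Rightarrow> 'd::finite edge \<Rightarrow> (('d edge \<Rightarrow> real) \<times> 'd evec) set" where
  "coupling_near_centre L r b =
     {z \<in> space (joint_space L). \<bar>fst z b - flex_centre L b (fst z) (snd z)\<bar> \<le> r}"

lemma sets_coupling_near_centre: "b \<in> LStar L \<Longrightarrow> coupling_near_centre L r b \<in> sets (joint_space L)"
  unfolding coupling_near_centre_def using LStar_subset_all_edges
  by (intro borel_measurable_le borel_measurable_abs borel_measurable_diff measurable_coupling
      measurable_flex_centre borel_measurable_const) auto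

lemma rigid_edges_ge_eq:
  "{z \<in> space (joint_space L). t \<le> real (card (rigid_edges L r (fst z) (snd z)))} =
    {z \<in> space (joint_space L). t \<le> real (card {b\<in>LStar L. z \<in> coupling_near_centre L r b})}"
  unfolding rigid_edges_def coupling_near_centre_def by (simp cong: conj_cong)

lemma sets_rigid_edges_ge:
  "{z \<in> space (joint_space L). t \<le> real (card (rigid_edges L r (fst z) (snd z)))} \<in> sets (joint_space L)"
  unfolding rigid_edges_ge_eq by (intro sets_card_events_ge finite_LStar sets_coupling_near_centre)

definition fibre_law :: "int \<Rightarrow> (('d::finite edge \<Rightarrow> real) \<Rightarrow> 'd evec measure) \<Rightarrow> ('d edge \<Rightarrow> real)
    \<Rightarrow> (('d edge \<Rightarrow> real) \<times> 'd evec) measure" where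
  "fibre_law L \<kappa> J = distr (\<kappa> (restrict J (all_edges - LStar L))) (joint_space L) (\<lambda>E. (J, E))"

lemma metaP_eq_bind: "metaP L \<kappa> = nu \<bind> fibre_law L \<kappa>"
  unfolding metaP_def fibre_law_def ..

lemma nu_in_prob_algebra: "nu \<in> space (prob_algebra nu)"
  using prob_space_nu by (auto simp: space_prob_algebra)

context
  fixes L :: int and \<kappa> :: "('d::finite edge \<Rightarrow> real) \<Rightarrow> 'd evec measure"
  assumes kernel: "metastate_kernel L \<kappa>"
begin

lemma measurable_kappa_restrict:
  "(\<lambda>J. \<kappa> (restrict J (all_edges - LStar L))) \<in> nu \<rightarrow>\<^sub>M prob_algebra (Espace L)"
proof -
  have "(\<lambda>J. restrict J (all_edges - LStar L)) \<in> nu \<rightarrow>\<^sub>M (\<Pi>\<^sub>M e\<in>all_edges - LStar L. borel)"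
    unfolding nu_def by (rule measurable_restrict_subset') simp_all
  moreover have "\<kappa> \<in> (\<Pi>\<^sub>M e\<in>all_edges - LStar L. borel) \<rightarrow>\<^sub>M prob_algebra (Espace L)"
    using kernel unfolding metastate_kernel_def by blast
  ultimately show ?thesis
    by (rule measurable_compose)
qed

lemma kappa_restrict:
  assumes "J \<in> space nu"
  shows "sets (\<kappa> (restrict J (all_edges - LStar L))) = sets (Espace L)"
    and "space (\<kappa> (restrict J (all_edges - LStar L))) = space (Espace L)"
    and "prob_space (\<kappa> (restrict J (all_edges - LStar L)))"
  using measurable_space[OF measurable_kappa_restrict assms]
  by (auto simp: space_prob_algebra dest: sets_eq_imp_space_eq)

lemma measurable_fibre_law: "fibre_law L \<kappa> \<in> nu \<rightarrow>\<^sub>M prob_algebra (joint_space L)"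
  unfolding fibre_law_def
  by (rule measurable_distr_prob_space2[OF measurable_kappa_restrict]) (simp add: case_prod_Pair)

lemma sets_metaP: "sets (metaP L \<kappa>) = sets (joint_space L)"
  unfolding metaP_eq_bind by (rule sets_bind'[OF nu_in_prob_algebra measurable_fibre_law])

lemma space_metaP: "space (metaP L \<kappa>) = space (joint_space L)"
  using sets_metaP by (rule sets_eq_imp_space_eq)

lemma prob_space_metaP: "prob_space (metaP L \<kappa>)"
  unfolding metaP_eq_bind by (rule prob_space_bind'[OF nu_in_prob_algebra measurable_fibre_law])

lemma emeasure_fibre_law:
  assumes J: "J \<in> space nu" and X: "X \<in> sets (joint_space L)"
  shows "emeasure (fibre_law L \<kappa> J) X =
    emeasure (\<kappa> (restrict J (all_edges - LStar L))) {E \<in> space (Espace L). (J, E) \<in> X}"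
proof -
  have "(\<lambda>E. (J, E)) \<in> \<kappa> (restrict J (all_edges - LStar L)) \<rightarrow>\<^sub>M joint_space L"
    by (subst measurable_cong_sets[OF kappa_restrict(1)[OF J] refl]) (rule measurable_Pair1'[OF J])
  then have "emeasure (fibre_law L \<kappa> J) X =
      emeasure (\<kappa> (restrict J (all_edges - LStar L))) ((\<lambda>E. (J, E)) -` X \<inter> space (\<kappa> (restrict J (all_edges - LStar L))))"
    unfolding fibre_law_def by (rule emeasure_distr[OF _ X])
  moreover have "(\<lambda>E. (J, E)) -` X \<inter> space (\<kappa> (restrict J (all_edges - LStar L))) =
      {E \<in> space (Espace L). (J, E) \<in> X}"
    using kappa_restrict(2)[OF J] by blast
  ultimately show ?thesis
    by simp
qed

text \<open>Along the line \<open>J b = x\<close> through \<open>Y\<close> the law \<open>\<kappa>\<close> of \<open>E\<close> does not move, since it only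
  sees the couplings outside \<open>\<Lambda>\<^sup>*\<close>; so \<open>J b\<close> is a standard Gaussian independent of \<open>g\<close>.\<close>
lemma nn_integral_fibre_law_coupling_near_le:
  assumes b: "b \<in> LStar L" and r: "r \<ge> 0"
    and g[measurable]: "g \<in> borel_measurable (joint_space L)"
    and g_indep: "\<And>J E x. g (J(b := x), E) = g (J, E)"
    and Y: "Y \<in> space (\<Pi>\<^sub>M e\<in>all_edges - {b}. gauss)"
  shows "(\<integral>\<^sup>+x. emeasure (fibre_law L \<kappa> (Y(b := x)))
      {z \<in> space (joint_space L). \<bar>fst z b - g z\<bar> \<le> r} \<partial>gauss) \<le> ennreal r"
proof -
  let ?X = "{z \<in> space (joint_space L). \<bar>fst z b - g z\<bar> \<le> r}"
  have b_all: "b \<in> all_edges"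
    using b LStar_subset_all_edges by blast
  note [measurable] = measurable_coupling[OF b_all]
  have X: "?X \<in> sets (joint_space L)"
    by measurable
  have Y_upd: "Y(b := x) \<in> space nu" for x
  proof -
    have "Y(b := x) \<in> PiE (insert b (all_edges - {b})) (\<lambda>_. space gauss)"
      using Y by (intro PiE_fun_upd) (auto simp: space_PiM)
    then show ?thesis
      unfolding nu_def space_PiM using insert_Diff[OF b_all] by simp
  qed
  have restrict_upd: "restrict (Y(b := x)) (all_edges - LStar L) = restrict Y (all_edges - LStar L)" for x
    using b by (auto simp: restrict_def fun_eq_iff)
  define K where "K = \<kappa> (restrict Y (all_edges - LStar L))"
  note K = kappa_restrict[OF Y_upd[of 0], unfolded restrict_upd, folded K_def]
  define c where "c E = g (Y(b := 0), E)" for E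
  have c: "c \<in> borel_measurable K"
    unfolding c_def measurable_cong_sets[OF K(1) refl]
    by (rule measurable_compose[OF measurable_Pair1'[OF Y_upd] g])
  have "emeasure (fibre_law L \<kappa> (Y(b := x))) ?X = emeasure K {E \<in> space K. \<bar>x - c E\<bar> \<le> r}" for x
  proof -
    have "g (Y(b := x), E) = c E" for E
      unfolding c_def by (metis g_indep fun_upd_upd)
    then show ?thesis
      unfolding emeasure_fibre_law[OF Y_upd X] restrict_upd K_def[symmetric] K(2)
      using Y_upd[of x] by (auto simp: space_pair_measure intro!: arg_cong[where f="emeasure K"])
  qed
  then show ?thesis
    using nn_integral_gauss_near_le[OF K(3) c r] by simp
qed

lemma emeasure_metaP_coupling_near_le:
  assumes b: "b \<in> LStar L" and r: "r \<ge> 0"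
    and g[measurable]: "g \<in> borel_measurable (joint_space L)"
    and g_indep: "\<And>J E x. g (J(b := x), E) = g (J, E)"
  shows "emeasure (metaP L \<kappa>) {z \<in> space (joint_space L). \<bar>fst z b - g z\<bar> \<le> r} \<le> ennreal r"
proof -
  define X where "X = {z \<in> space (joint_space L). \<bar>fst z b - g z\<bar> \<le> r}"
  let ?R = "\<Pi>\<^sub>M e\<in>all_edges - {b}. gauss"
  have b_all: "b \<in> all_edges"
    using b LStar_subset_all_edges by blast
  note [measurable] = measurable_coupling[OF b_all]
  have X[measurable]: "X \<in> sets (joint_space L)"
    unfolding X_def by measurable
  have h: "(\<lambda>J. emeasure (fibre_law L \<kappa> J) X) \<in> borel_measurable nu"
    using measurable_compose[OF measurable_prob_algebraD[OF measurable_fibre_law]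
        measurable_emeasure_subprob_algebra[OF X]] .
  have "emeasure (metaP L \<kappa>) X = (\<integral>\<^sup>+J. emeasure (fibre_law L \<kappa> J) X \<partial>nu)"
    unfolding metaP_eq_bind by (rule emeasure_bind_prob_algebra[OF nu_in_prob_algebra measurable_fibre_law X])
  also have "\<dots> = (\<integral>\<^sup>+Y. (\<integral>\<^sup>+x. emeasure (fibre_law L \<kappa> (Y(b := x))) X \<partial>gauss) \<partial>?R)"
    by (rule nn_integral_nu_split[OF b_all h])
  also have "\<dots> \<le> (\<integral>\<^sup>+Y. ennreal r \<partial>?R)"
    unfolding X_def using nn_integral_fibre_law_coupling_near_le[OF b r g g_indep]
    by (intro nn_integral_mono) simp
  also have "\<dots> = ennreal r"
    using prob_space_PiM[of "all_edges - {b}" "\<lambda>_. gauss"] prob_space_gauss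
    by (simp add: prob_space.emeasure_space_1)
  finally show ?thesis
    unfolding X_def .
qed

lemma AE_metaP_Ecocycle: "AE z in metaP L \<kappa>. Ecocycle L (snd z)"
proof -
  have pred[measurable]: "Measurable.pred (joint_space L) (\<lambda>z. Ecocycle L (snd z))"
    by (rule measurable_compose[OF measurable_snd pred_Ecocycle])
  have "AE z in fibre_law L \<kappa> J. Ecocycle L (snd z)" if J: "J \<in> space nu" for J
  proof -
    have "restrict J (all_edges - LStar L) \<in> space (\<Pi>\<^sub>M e\<in>all_edges - LStar L. (borel :: real measure))"
      using J unfolding nu_def by (auto simp: space_PiM)
    then have "AE E in \<kappa> (restrict J (all_edges - LStar L)). Ecocycle L E"
      using kernel unfolding metastate_kernel_def by blast
    moreover have "(\<lambda>E. (J, E)) \<in> \<kappa> (restrict J (all_edges - LStar L)) \<rightarrow>\<^sub>M joint_space L"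
      by (subst measurable_cong_sets[OF kappa_restrict(1)[OF J] refl]) (rule measurable_Pair1'[OF J])
    ultimately show ?thesis
      unfolding fibre_law_def by (subst AE_distr_iff) (auto simp: pred_def)
  qed
  then show ?thesis
    unfolding metaP_eq_bind
    by (subst AE_bind[OF measurable_prob_algebraD[OF measurable_fibre_law] pred]) (rule AE_I2)
qed

lemma AE_metaP_not_critical: "AE z in metaP L \<kappa>. fst z \<notin> critical L (snd z)"
proof -
  have "AE z in metaP L \<kappa>. fst z (witness_edge L \<eta> \<eta>') \<noteq> critical_value L \<eta> \<eta>' (fst z) (snd z)"
    if "\<eta> \<in> SL L" "\<eta>' \<in> SL L" "\<eta> \<noteq> \<eta>'" for \<eta> \<eta>'
  proof (rule AE_I')
    let ?w = "witness_edge L \<eta> \<eta>'" and ?c = "\<lambda>z. critical_value L \<eta> \<eta>' (fst z) (snd z)"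
    let ?H = "{z \<in> space (joint_space L). \<bar>fst z ?w - ?c z\<bar> \<le> 0}"
    have w: "?w \<in> LStar L"
      using witness_edge[OF that] by simp
    have "?H \<in> sets (metaP L \<kappa>)"
      unfolding sets_metaP using w LStar_subset_all_edges
      by (intro borel_measurable_le borel_measurable_abs borel_measurable_diff measurable_coupling
          measurable_critical_value that borel_measurable_const) auto
    moreover have "emeasure (metaP L \<kappa>) ?H \<le> 0"
      using emeasure_metaP_coupling_near_le[OF w order_refl measurable_critical_value[OF that(1,2)]]
      by (simp add: critical_value_fun_upd)
    ultimately show "?H \<in> null_sets (metaP L \<kappa>)"
      by auto
    show "{z \<in> space (metaP L \<kappa>). \<not> fst z ?w \<noteq> ?c z} \<subseteq> ?H"
      by (auto simp: space_metaP)
  qed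
  then show ?thesis
    unfolding not_critical_iff by (intro AE_finite_allI finite_SL) auto
qed

lemma prob_many_rigid_edges_le:
  assumes r: "r \<ge> 0" and t: "t > 0"
  shows "measure (metaP L \<kappa>) {z \<in> space (metaP L \<kappa>). t \<le> real (card (rigid_edges L r (fst z) (snd z)))}
    \<le> real (card (LStar L :: 'd edge set)) * r / t"
proof -
  interpret prob_space "metaP L \<kappa>"
    by (rule prob_space_metaP)
  have "prob (coupling_near_centre L r b) \<le> r" if b: "b \<in> LStar L" for b
    using emeasure_metaP_coupling_near_le[OF b r measurable_flex_centre] r
    unfolding coupling_near_centre_def by (simp add: flex_centre_fun_upd emeasure_eq_measure)
  then have "prob {z \<in> space (metaP L \<kappa>). t \<le> real (card {b\<in>LStar L. z \<in> coupling_near_centre L r b})}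
      \<le> real (card (LStar L :: 'd edge set)) * r / t"
    by (intro prob_card_events_ge_le finite_LStar t) (simp_all add: sets_metaP sets_coupling_near_centre)
  then show ?thesis
    unfolding space_metaP rigid_edges_ge_eq .
qed

lemma ex_regular_event_few_rigid_edges:
  assumes \<epsilon>: "\<epsilon> > 0" and L: "L \<ge> 1"
  shows "\<exists>B\<in>sets (metaP L \<kappa>). measure (metaP L \<kappa>) B > 1 - \<epsilon> \<and>
    (\<forall>z\<in>B. Ecocycle L (snd z) \<and> fst z \<notin> critical L (snd z) \<and>
      real (card (rigid_edges L (\<epsilon>\<^sup>2 / 2) (fst z) (snd z))) < \<epsilon> * real (card (LStar L :: 'd edge set)))"
proof -
  interpret prob_space "metaP L \<kappa>"
    by (rule prob_space_metaP)
  define N where "N = real (card (LStar L :: 'd edge set))"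
  have N: "N > 0"
    unfolding N_def using LStar_nonempty[OF L, where 'd='d] finite_LStar[of L, where 'd='d]
    by (simp add: card_gt_0_iff)
  define Many where "Many = {z \<in> space (metaP L \<kappa>). \<epsilon> * N \<le> real (card (rigid_edges L (\<epsilon>\<^sup>2 / 2) (fst z) (snd z)))}"
  have Many: "Many \<in> events" "prob Many \<le> \<epsilon> / 2"
    using sets_rigid_edges_ge prob_many_rigid_edges_le[of "\<epsilon>\<^sup>2 / 2" "\<epsilon> * N"] \<epsilon> N
    unfolding Many_def N_def by (auto simp: sets_metaP space_metaP power2_eq_square)
  have "AE z in metaP L \<kappa>. Ecocycle L (snd z) \<and> fst z \<notin> critical L (snd z)"
    using AE_metaP_Ecocycle AE_metaP_not_critical by eventually_elim simp
  then obtain Null where regular: "\<And>z. z \<in> space (metaP L \<kappa>) - Null \<Longrightarrow>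
      Ecocycle L (snd z) \<and> fst z \<notin> critical L (snd z)" and Null: "Null \<in> null_sets (metaP L \<kappa>)"
    by (rule AE_E3) blast
  define B where "B = space (metaP L \<kappa>) - (Null \<union> Many)"
  have "prob (Null \<union> Many) \<le> \<epsilon> / 2"
    using measure_Un_le[of Null "metaP L \<kappa>" Many] null_setsD2[OF Null] Null Many
    by (simp add: measure_eq_0_null_sets)
  then have "prob B > 1 - \<epsilon>"
    using prob_compl[of "Null \<union> Many"] Null Many \<epsilon> unfolding B_def by auto
  moreover have "B \<in> events"
    using Null Many unfolding B_def by auto
  moreover have "\<forall>z\<in>B. Ecocycle L (snd z) \<and> fst z \<notin> critical L (snd z) \<and>
      real (card (rigid_edges L (\<epsilon>\<^sup>2 / 2) (fst z) (snd z))) < \<epsilon> * real (card (LStar L :: 'd edge set))"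
    using regular unfolding B_def Many_def N_def by auto
  ultimately show ?thesis
    by blast
qed

end

theorem lemma4p1:
  fixes \<epsilon> :: real
  assumes "\<epsilon> > 0"
  shows "\<exists>\<delta>>0. \<forall>(L::int) (\<kappa> :: ('d::finite edge \<Rightarrow> real) \<Rightarrow> 'd evec measure).
           L \<ge> 1 \<longrightarrow> metastate_kernel L \<kappa> \<longrightarrow>
           (\<exists>B\<in>sets (metaP L \<kappa>). measure (metaP L \<kappa>) B > 1 - \<epsilon> \<and>
              (\<forall>(J, E)\<in>B. real (card {b\<in>LStar L. \<bar>flexibility L E b J\<bar> > \<delta>})
                            > (1 - \<epsilon>) * real (card (LStar L :: 'd edge set))))"
proof -
  have "\<exists>B\<in>sets (metaP L \<kappa>). measure (metaP L \<kappa>) B > 1 - \<epsilon> \<and>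
      (\<forall>(J, E)\<in>B. real (card {b\<in>LStar L. \<bar>flexibility L E b J\<bar> > \<epsilon>\<^sup>2})
                    > (1 - \<epsilon>) * real (card (LStar L :: 'd edge set)))"
    if L: "L \<ge> 1" and kernel: "metastate_kernel L \<kappa>" for L and \<kappa> :: "('d edge \<Rightarrow> real) \<Rightarrow> 'd evec measure"
  proof -
    obtain B where B: "B \<in> sets (metaP L \<kappa>)" "measure (metaP L \<kappa>) B > 1 - \<epsilon>"
      and good: "\<forall>z\<in>B. Ecocycle L (snd z) \<and> fst z \<notin> critical L (snd z) \<and>
        real (card (rigid_edges L (\<epsilon>\<^sup>2 / 2) (fst z) (snd z))) < \<epsilon> * real (card (LStar L :: 'd edge set))"
      using ex_regular_event_few_rigid_edges[OF kernel assms L] by blast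
    have "real (card {b\<in>LStar L. \<bar>flexibility L E b J\<bar> > \<epsilon>\<^sup>2}) > (1 - \<epsilon>) * real (card (LStar L :: 'd edge set))"
      if "(J, E) \<in> B" for J E
      using good that by (intro card_flexible_edges_gt) auto
    then show ?thesis
      using B by blast
  qed
  then show ?thesis
    using assms by (intro exI[of _ "\<epsilon>\<^sup>2"]) auto
qed

end
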